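(* Let $q$ be a prime power and let $n_1,n_2$ be odd positive integers, each coprime to $q$. If every irreducible monic factor of $x^{n_1}-1$ and every irreducible monic factor of $x^{n_2}-1$ in $\mathbb{F}_{q^2}[x]$ is SCRIM, then every irreducible monic factor of $x^{n_1n_2}-1$ in $\mathbb{F}_{q^2}[x]$ is SCRIM.
   Context: $\mathbb{F}_{q^2}$ is the finite field with $q^2$ elements. For $\alpha\in\mathbb{F}_{q^2}$ put $\bar\alpha=\alpha^q$, and for $f(x)=\sum_i f_ix^i$ put $\overline{f(x)}=\sum_i \bar f_i x^i$. For $f(x)$ with $f(0)\neq 0$, $f^*(x)=x^{\deg f}f(0)^{-1}f(1/x)$ and $f^\dagger(x)=\overline{f^*(x)}$. A polynomial is SCRIM if it is monic, irreducible over $\mathbb{F}_{q^2}$, has nonzero constant term, and satisfies $f=f^\dagger$. *)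

theory Defs
  imports "HOL-Computational_Algebra.Computational_Algebra"
begin

text \<open>Conjugation on F_{q^2}: alpha maps to alpha^q, extended coefficientwise to polynomials.\<close>
definition conj_poly :: "nat \<Rightarrow> 'a::field poly \<Rightarrow> 'a poly" where
  "conj_poly q f = map_poly (\<lambda>c. c ^ q) f"

text \<open>f^*(x) = x^(deg f) f(0)^(-1) f(1/x); reflect_poly f is x^(deg f) f(1/x).\<close>
definition recip_poly :: "'a::field poly \<Rightarrow> 'a poly" where
  "recip_poly f = smult (inverse (coeff f 0)) (reflect_poly f)"

definition dagger_poly :: "nat \<Rightarrow> 'a::field poly \<Rightarrow> 'a poly" where
  "dagger_poly q f = conj_poly q (recip_poly f)"

definition SCRIM :: "nat \<Rightarrow> 'a::field poly \<Rightarrow> bool" where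
  "SCRIM q f \<longleftrightarrow> lead_coeff f = 1 \<and> irreducible f \<and> coeff f 0 \<noteq> 0 \<and> f = dagger_poly q f"

end

theory Submission
  imports Defs "HOL-Algebra.Algebraic_Closure_Type" "HOL-Number_Theory.Residues"
begin

(* Let F have q^2 elements and let f be a monic irreducible factor of x^n - 1 with a root alpha
   in the algebraic closure; the roots of f are the conjugates alpha^(q^(2i)). The roots of
   f^dagger are the elements (1/beta)^q for the roots beta of f, so f = f^dagger exactly when
   alpha^(-q) is a conjugate of alpha, i.e. when alpha^(q^e) = 1/alpha for some odd e. Multiplying
   such odd exponents over all n-th roots of unity, and using that x^n - 1 has n distinct roots,
   every monic irreducible factor of x^n - 1 is SCRIM iff n divides q^E + 1 for some odd E.
   This property passes from n1 and n2 to n1 n2: if n1 and n2 divide u + 1, where u = q^(ab),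
   then n1 n2 divides u^n1 + 1, because (u^n1 + 1)/(u + 1) is congruent to n1 modulo u + 1. *)

hide_const (open) UnivPoly.monom Polynomials.lead_coeff Polynomials.degree up_ring.coeff
  Divisibility.irreducible Divisibility.prime module.smult Coset.order

section \<open>Divisors of q^E + 1 for odd E\<close>

lemma pow_odd_plus_one_eq:
  fixes u :: "'a::comm_ring_1"
  assumes "odd m"
  shows "u ^ m + 1 = (u + 1) * (\<Sum>i<m. (- u) ^ i)"
  using one_diff_power_eq[of "- u" m] assms by (simp add: add.commute)

lemma plus_one_dvd_pow_odd_plus_one:
  fixes u :: "'a::comm_ring_1"
  assumes "odd m"
  shows "u + 1 dvd u ^ m + 1"
  unfolding pow_odd_plus_one_eq[OF assms] by simp

lemma mult_dvd_pow_odd_plus_one: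
  fixes u d e :: int
  assumes "odd m" "d dvd int m" "d dvd u + 1" "e dvd u + 1"
  shows "d * e dvd u ^ m + 1"
proof -
  define S where "S = (\<Sum>i<m. (- u) ^ i)"
  have "- u - 1 = - (u + 1)"
    by simp
  hence "[- u = 1] (mod d)"
    using assms(3) by (simp only: cong_iff_dvd_diff dvd_minus_iff)
  hence "[S = (\<Sum>i<m. 1)] (mod d)"
    unfolding S_def by (intro cong_sum) (metis cong_pow power_one)
  hence "d dvd S"
    using assms(2) by (simp add: cong_dvd_iff)
  hence "d * e dvd S * (u + 1)"
    using assms(4) by (rule mult_dvd_mono)
  thus ?thesis
    by (simp add: pow_odd_plus_one_eq[OF assms(1)] S_def mult.commute)
qed

lemma mult_dvd_pow_plus_one_if_dvd_pow_odd_plus_one: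
  fixes q a b n1 n2 :: nat
  assumes "odd a" "odd b" "odd n1" "n1 dvd q ^ a + 1" "n2 dvd q ^ b + 1"
  shows "n1 * n2 dvd q ^ (a * b * n1) + 1"
proof -
  define u where "u = int q ^ (a * b)"
  have "int n1 dvd int q ^ a + 1" "int n2 dvd int q ^ b + 1"
    using assms(4,5) by (metis int_dvd_int_iff of_nat_1 of_nat_add of_nat_power)+
  moreover have "int q ^ a + 1 dvd u + 1" "int q ^ b + 1 dvd u + 1"
    using plus_one_dvd_pow_odd_plus_one[OF assms(2), of "int q ^ a"]
      plus_one_dvd_pow_odd_plus_one[OF assms(1), of "int q ^ b"]
    by (simp_all add: u_def mult.commute[of a b] flip: power_mult)
  ultimately have "int n1 * int n2 dvd u ^ n1 + 1"
    using assms(3) by (intro mult_dvd_pow_odd_plus_one) (auto intro: dvd_trans)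
  thus ?thesis
    unfolding u_def by (metis int_dvd_int_iff of_nat_1 of_nat_add of_nat_mult of_nat_power power_mult)
qed

section \<open>Polynomials over the algebraic closure\<close>

abbreviation to_ac_poly :: "'a::field poly \<Rightarrow> 'a alg_closure poly" where
  "to_ac_poly f \<equiv> map_poly to_ac f"

lemma to_ac_poly_diff: "to_ac_poly (f - g) = to_ac_poly f - to_ac_poly g"
  by (rule poly_eqI) (simp add: coeff_map_poly)

lemma to_ac_poly_mult: "to_ac_poly (f * g) = to_ac_poly f * to_ac_poly g"
  by (rule poly_eqI) (simp add: coeff_map_poly coeff_mult to_ac_sum)

lemma to_ac_poly_x_pow_minus_one: "to_ac_poly (monom 1 n - 1) = monom 1 n - 1"
  by (simp add: to_ac_poly_diff map_poly_monom)

lemma poly_to_ac_poly_eq_0_if_dvd: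
  assumes "f dvd g" "poly (to_ac_poly f) z = 0"
  shows "poly (to_ac_poly g) z = 0"
  using assms by (auto elim!: dvdE simp: to_ac_poly_mult)

lemma min_degree_root_poly_dvd:
  fixes m g :: "'a::field poly"
  assumes min: "\<And>h. h \<noteq> 0 \<Longrightarrow> poly (to_ac_poly h) z = 0 \<Longrightarrow> degree m \<le> degree h"
    and m: "m \<noteq> 0" "poly (to_ac_poly m) z = 0" and g: "poly (to_ac_poly g) z = 0"
  shows "m dvd g"
proof (rule ccontr)
  assume "\<not> m dvd g"
  hence "g mod m \<noteq> 0"
    by (simp add: mod_eq_0_iff_dvd)
  moreover have "poly (to_ac_poly (g mod m)) z = 0"
    using m g by (simp flip: minus_mult_div_eq_mod add: to_ac_poly_diff to_ac_poly_mult)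
  ultimately have "degree m \<le> degree (g mod m)"
    by (rule min)
  moreover have "degree (g mod m) < degree m"
    using m(1) \<open>g mod m \<noteq> 0\<close> by (rule degree_mod_less')
  ultimately show False
    by simp
qed

lemma min_degree_root_poly_irreducible:
  fixes m :: "'a::field poly"
  assumes min: "\<And>h. h \<noteq> 0 \<Longrightarrow> poly (to_ac_poly h) z = 0 \<Longrightarrow> degree m \<le> degree h"
    and m: "m \<noteq> 0" "poly (to_ac_poly m) z = 0"
  shows "irreducible m"
proof (rule Factorial_Ring.irreducibleI)
  show "\<not> is_unit m"
  proof
    assume "is_unit m"
    then obtain c where "m = [:c:]" "c \<noteq> 0"
      using m(1) by (metis is_unit_iff_degree degree_eq_zeroE pCons_0_0)
    thus False
      using m(2) by (simp add: map_poly_pCons)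
  qed
next
  fix a b assume ab: "m = a * b"
  hence "a \<noteq> 0" "b \<noteq> 0" and deg: "degree m = degree a + degree b"
    using m(1) by (auto simp: degree_mult_eq)
  have "poly (to_ac_poly a) z = 0 \<or> poly (to_ac_poly b) z = 0"
    using m(2) ab by (simp add: to_ac_poly_mult)
  hence "degree b = 0 \<or> degree a = 0"
    using min[OF \<open>a \<noteq> 0\<close>] min[OF \<open>b \<noteq> 0\<close>] deg by auto
  thus "is_unit a \<or> is_unit b"
    using \<open>a \<noteq> 0\<close> \<open>b \<noteq> 0\<close> by (auto simp: is_unit_iff_degree)
qed (use m in auto)

lemma minimal_polynomial_exists:
  fixes p :: "'a::field poly"
  assumes "p \<noteq> 0" "poly (to_ac_poly p) z = 0"
  obtains m where "lead_coeff m = 1" "irreducible m" "poly (to_ac_poly m) z = 0"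
    "\<And>g. poly (to_ac_poly g) z = 0 \<Longrightarrow> m dvd g"
proof -
  obtain m0 where m0: "m0 \<noteq> 0" "poly (to_ac_poly m0) z = 0"
    and least: "\<And>h. h \<noteq> 0 \<Longrightarrow> poly (to_ac_poly h) z = 0 \<Longrightarrow> degree m0 \<le> degree h"
    using ex_has_least_nat[of "\<lambda>h. h \<noteq> 0 \<and> poly (to_ac_poly h) z = 0" p degree] assms
    by blast
  define m where "m = smult (inverse (lead_coeff m0)) m0"
  have m: "m \<noteq> 0" "poly (to_ac_poly m) z = 0" "lead_coeff m = 1"
    using m0 by (simp_all add: m_def map_poly_smult)
  have "degree m = degree m0"
    using m0 by (simp add: m_def)
  hence min: "\<And>h. h \<noteq> 0 \<Longrightarrow> poly (to_ac_poly h) z = 0 \<Longrightarrow> degree m \<le> degree h"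
    using least by simp
  show thesis
    using m min by (intro that min_degree_root_poly_irreducible min_degree_root_poly_dvd)
qed

lemma irreducible_dvd_if_common_root:
  fixes f g :: "'a::field poly"
  assumes "irreducible f" "poly (to_ac_poly f) z = 0" "poly (to_ac_poly g) z = 0"
  shows "f dvd g"
proof -
  have "f \<noteq> 0"
    using assms(1) by auto
  then obtain m where m: "irreducible m" "\<And>g. poly (to_ac_poly g) z = 0 \<Longrightarrow> m dvd g"
    using minimal_polynomial_exists assms(2) by blast
  then obtain u where u: "f = m * u"
    using assms(2) by blast
  hence "is_unit u"
    using Factorial_Ring.irreducibleD[OF assms(1) u] irreducible_not_unit[OF m(1)] by blast
  thus ?thesis
    using u m(2)[OF assms(3)] by (simp add: mult_unit_dvd_iff)
qed

section \<open>Frobenius maps and finite fields\<close>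

lemma prime_CHAR_finite_field: "prime CHAR('a::{field,finite})"
  using prime_CHAR_semidom finite_imp_CHAR_pos[OF finite_UNIV] by blast

lemma CHAR_eq_if_card_eq_prime_power:
  assumes "card (UNIV :: 'a::{field,finite} set) = p ^ j" "prime p"
  shows "CHAR('a) = p"
proof -
  have "CHAR('a) dvd p ^ j"
    using CHAR_dvd_CARD[where 'a='a] assms(1) by simp
  hence "CHAR('a) dvd p"
    using prime_CHAR_finite_field prime_dvd_power by blast
  thus ?thesis
    using prime_CHAR_finite_field[where 'a='a] assms(2) by (simp add: primes_dvd_imp_eq)
qed

(* Primes.finite_field_power_card_eq_same is stated for the type class finite_field, which a
   type variable of sort {field, finite} does not belong to. *)
lemma finite_field_power_card:
  fixes x :: "'a::{field,finite}"
  shows "x ^ card (UNIV :: 'a set) = x"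
proof (cases "x = 0")
  case False
  define U where "U = UNIV - {0 :: 'a}"
  have "(\<Prod>y\<in>U. x * y) = (\<Prod>y\<in>U. y)"
    using False by (intro prod.reindex_bij_witness[of _ "\<lambda>y. y / x" "\<lambda>y. x * y"])
      (auto simp: U_def)
  moreover have "(\<Prod>y\<in>U. x * y) = x ^ card U * (\<Prod>y\<in>U. y)"
    by (simp add: prod.distrib)
  moreover have "(\<Prod>y\<in>U. y) \<noteq> 0"
    by (simp add: U_def)
  ultimately have "x ^ card U = 1"
    by simp
  moreover have "card (UNIV :: 'a set) = Suc (card U)"
    using finite_UNIV_card_ge_0[where 'a='a] by (simp add: U_def)
  ultimately show ?thesis
    by simp
qed (use finite_UNIV_card_ge_0[where 'a='a] in simp)

lemma inj_power_char_power:
  assumes "prime CHAR('b::idom)" "m = CHAR('b) ^ j"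
  shows "inj (\<lambda>x :: 'b. x ^ m)"
proof (rule injI)
  fix x y :: 'b assume "x ^ m = y ^ m"
  moreover have "x ^ m = (x - y) ^ m + y ^ m"
    using freshmans_dream'[OF assms, of "x - y" y] by simp
  ultimately have "(x - y) ^ m = 0"
    by simp
  thus "x = y"
    by simp
qed

lemma uminus_power_char_power:
  fixes x :: "'b::comm_ring_1"
  assumes "prime CHAR('b)" "m = CHAR('b) ^ j"
  shows "(- x) ^ m = - (x ^ m)"
proof -
  have "m > 0"
    using assms by (simp add: prime_gt_0_nat)
  hence "x ^ m + (- x) ^ m = 0"
    using freshmans_dream'[OF assms, of x "- x"] by (simp add: power_0_left)
  thus ?thesis
    by (simp add: eq_neg_iff_add_eq_0 add.commute)
qed

lemma poly_map_poly_power_char_power: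
  fixes g :: "'b::idom poly"
  assumes "prime CHAR('b)" "m = CHAR('b) ^ j"
  shows "poly (map_poly (\<lambda>c. c ^ m) g) (y ^ m) = poly g y ^ m"
proof -
  have "m > 0"
    using assms by (simp add: prime_gt_0_nat)
  hence "poly (map_poly (\<lambda>c. c ^ m) g) (y ^ m) = (\<Sum>i\<le>degree g. (coeff g i * y ^ i) ^ m)"
    by (simp add: poly_altdef degree_map_poly coeff_map_poly power_mult_distrib
        flip: power_mult mult.commute)
  also have "\<dots> = poly g y ^ m"
    by (simp add: poly_altdef freshmans_dream_sum'[OF assms])
  finally show ?thesis .
qed

lemma map_poly_power_char_power_mult:
  fixes f g :: "'b::comm_ring_1 poly"
  assumes "prime CHAR('b)" "m = CHAR('b) ^ j"
  shows "map_poly (\<lambda>x. x ^ m) (f * g) = map_poly (\<lambda>x. x ^ m) f * map_poly (\<lambda>x. x ^ m) g"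
proof -
  have "m > 0"
    using assms by (simp add: prime_gt_0_nat)
  thus ?thesis
    by (intro poly_eqI)
      (simp add: coeff_map_poly coeff_mult freshmans_dream_sum'[OF assms] power_mult_distrib
        power_0_left)
qed

lemma map_poly_power_char_power_prod:
  fixes F :: "'c \<Rightarrow> 'b::comm_ring_1 poly"
  assumes "prime CHAR('b)" "m = CHAR('b) ^ j"
  shows "map_poly (\<lambda>x. x ^ m) (\<Prod>i\<in>A. F i) = (\<Prod>i\<in>A. map_poly (\<lambda>x. x ^ m) (F i))"
  by (induction A rule: infinite_finite_induct)
    (simp_all add: map_poly_power_char_power_mult[OF assms])

lemma prime_CHAR_alg_closure: "prime CHAR('a::{field,finite} alg_closure)"
  by (simp add: prime_CHAR_finite_field)

lemma in_range_to_ac_if_power_card_eq: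
  fixes y :: "'a::{field,finite} alg_closure"
  assumes "y ^ card (UNIV :: 'a set) = y"
  shows "y \<in> range to_ac"
proof -
  define Q where "Q = card (UNIV :: 'a set)"
  define F where "F = {x :: 'a alg_closure. x ^ Q = x}"
  define p :: "'a alg_closure poly" where "p = monom 1 Q - [:0, 1:]"
  have "card {0, 1 :: 'a} \<le> Q"
    unfolding Q_def by (rule card_mono) simp_all
  hence "coeff p Q = 1" "degree p \<le> Q"
    by (auto simp: p_def coeff_pCons split: nat.split intro!: degree_diff_le degree_monom_le)
  moreover have "{x. poly p x = 0} = F"
    by (auto simp: p_def F_def poly_monom)
  ultimately have "finite F" "card F \<le> Q"
    using poly_roots_finite[of p] card_poly_roots_bound[of p] by force+
  moreover have "range to_ac \<subseteq> F"
    by (auto simp: F_def Q_def finite_field_power_card simp flip: to_ac_power)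
  moreover have "card (range (to_ac :: 'a \<Rightarrow> 'a alg_closure)) = Q"
    by (simp add: Q_def card_image inj_to_ac)
  ultimately have "range to_ac = F"
    by (metis card_mono card_subset_eq le_antisym)
  thus ?thesis
    using assms by (auto simp: Q_def F_def)
qed

lemma poly_to_ac_poly_power_card_power:
  fixes f :: "'a::{field,finite} poly"
  assumes "card (UNIV :: 'a set) = Q" "Q = CHAR('a) ^ j" "poly (to_ac_poly f) z = 0"
  shows "poly (to_ac_poly f) (z ^ (Q ^ t)) = 0"
proof -
  have Qt: "Q ^ t = CHAR('a alg_closure) ^ (j * t)"
    using assms(2) by (simp add: power_mult)
  have "c ^ (Q ^ t) = c" for c :: 'a
    by (induction t) (simp_all add: power_mult finite_field_power_card assms(1)[symmetric] mult.commute)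
  hence "map_poly (\<lambda>c. c ^ (Q ^ t)) (to_ac_poly f) = to_ac_poly f"
    using Qt prime_CHAR_alg_closure[where 'a='a]
    by (intro poly_eqI) (simp add: coeff_map_poly prime_gt_0_nat flip: to_ac_power)
  moreover have "Q > 0"
    using assms(1) finite_UNIV_card_ge_0[where 'a='a] by simp
  ultimately show ?thesis
    using poly_map_poly_power_char_power[OF prime_CHAR_alg_closure Qt, of "to_ac_poly f" z] assms(3)
    by simp
qed

lemma prod_linear_factors_in_range_to_ac_poly:
  fixes S :: "'a::{field,finite} alg_closure set"
  assumes "card (UNIV :: 'a set) = Q" "Q = CHAR('a) ^ j" "(\<lambda>x. x ^ Q) ` S = S"
  shows "\<exists>g. to_ac_poly g = (\<Prod>w\<in>S. [:- w, 1:])"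
proof -
  define h where "h = (\<Prod>w\<in>S. [:- w, 1:])"
  have char: "prime CHAR('a alg_closure)" "Q = CHAR('a alg_closure) ^ j"
    using assms(2) prime_CHAR_alg_closure by simp_all
  hence "Q > 0"
    by (simp add: prime_gt_0_nat)
  have inj: "inj_on (\<lambda>x. x ^ Q) S"
    using inj_power_char_power[OF char] by (rule inj_on_subset) simp
  have "map_poly (\<lambda>x. x ^ Q) h = (\<Prod>w\<in>S. [:- (w ^ Q), 1:])"
    unfolding h_def using \<open>Q > 0\<close>
    by (simp add: map_poly_power_char_power_prod[OF char] map_poly_pCons
        uminus_power_char_power[OF char])
  also have "\<dots> = (\<Prod>w\<in>(\<lambda>x. x ^ Q) ` S. [:- w, 1:])"
    by (rule prod.reindex[OF inj, symmetric, unfolded comp_def])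
  finally have "map_poly (\<lambda>x. x ^ Q) h = h"
    unfolding assms(3) h_def .
  hence "coeff h i ^ Q = coeff h i" for i
    using \<open>Q > 0\<close> by (metis coeff_map_poly power_0_left less_irrefl)
  hence "coeff h i \<in> range to_ac" for i
    using assms(1) in_range_to_ac_if_power_card_eq by blast
  hence "to_ac_poly (map_poly of_ac h) = h"
    by (intro poly_eqI) (simp add: coeff_map_poly to_ac_of_ac)
  thus ?thesis
    unfolding h_def by blast
qed

lemma frobenius_orbit_of_root:
  fixes f :: "'a::{field,finite} poly"
  assumes "card (UNIV :: 'a set) = Q" "Q = CHAR('a) ^ j" "f \<noteq> 0" "poly (to_ac_poly f) \<zeta> = 0"
  defines "S \<equiv> range (\<lambda>i. \<zeta> ^ (Q ^ i))"
  shows "finite S" "(\<lambda>x. x ^ Q) ` S = S"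
proof -
  have char: "prime CHAR('a alg_closure)" "Q = CHAR('a alg_closure) ^ j"
    using assms(2) prime_CHAR_alg_closure by simp_all
  have "finite {x. poly (to_ac_poly f) x = 0}"
    using assms(3) by (intro poly_roots_finite) (simp add: map_poly_eq_0_iff)
  moreover have "S \<subseteq> {x. poly (to_ac_poly f) x = 0}"
    using poly_to_ac_poly_power_card_power[OF assms(1,2,4)] by (auto simp: S_def)
  ultimately show "finite S"
    by (rule finite_subset[rotated])
  moreover have "(\<lambda>x. x ^ Q) ` S \<subseteq> S"
  proof (rule image_subsetI)
    fix x assume "x \<in> S"
    then obtain i where "x = \<zeta> ^ (Q ^ i)"
      by (auto simp: S_def)
    hence "x ^ Q = \<zeta> ^ (Q ^ Suc i)"
      by (simp only: power_Suc2 power_mult)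
    thus "x ^ Q \<in> S"
      by (simp add: S_def del: power_Suc)
  qed
  moreover have "inj_on (\<lambda>x. x ^ Q) S"
    using inj_power_char_power[OF char] by (rule inj_on_subset) simp
  ultimately show "(\<lambda>x. x ^ Q) ` S = S"
    by (rule endo_inj_surj)
qed

lemma roots_of_irreducible_frobenius_orbit:
  fixes f :: "'a::{field,finite} poly"
  assumes "card (UNIV :: 'a set) = Q" "Q = CHAR('a) ^ j" "irreducible f"
    and "poly (to_ac_poly f) \<zeta> = 0" "poly (to_ac_poly f) \<beta> = 0"
  shows "\<exists>i. \<beta> = \<zeta> ^ (Q ^ i)"
proof -
  define S where "S = range (\<lambda>i. \<zeta> ^ (Q ^ i))"
  have "f \<noteq> 0"
    using assms(3) by auto
  hence "finite S" "(\<lambda>x. x ^ Q) ` S = S"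
    unfolding S_def using frobenius_orbit_of_root[OF assms(1,2) _ assms(4)] by simp_all
  then obtain g where g: "to_ac_poly g = (\<Prod>w\<in>S. [:- w, 1:])"
    using prod_linear_factors_in_range_to_ac_poly[OF assms(1,2)] by blast
  have "\<zeta> \<in> S"
    unfolding S_def by (rule range_eqI[of _ _ 0]) simp
  hence "poly (to_ac_poly g) \<zeta> = 0"
    using \<open>finite S\<close> by (auto simp: g poly_prod prod_zero_iff)
  hence "f dvd g"
    by (rule irreducible_dvd_if_common_root[OF assms(3,4)])
  hence "poly (to_ac_poly g) \<beta> = 0"
    using assms(5) by (rule poly_to_ac_poly_eq_0_if_dvd)
  hence "\<beta> \<in> S"
    using \<open>finite S\<close> by (auto simp: g poly_prod prod_zero_iff)
  thus ?thesis
    by (auto simp: S_def)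
qed

section \<open>Roots of unity\<close>

lemma power_mod_eq_if_power_eq_1:
  fixes z :: "'b::monoid_mult"
  assumes "z ^ n = 1"
  shows "z ^ (k mod n) = z ^ k"
proof -
  have "z ^ k = (z ^ n) ^ (k div n) * z ^ (k mod n)"
    by (simp flip: power_mult power_add)
  thus ?thesis
    using assms by simp
qed

lemma power_pow_totient_eq:
  fixes z :: "'b::monoid_mult"
  assumes "z ^ n = 1" "coprime n Q"
  shows "z ^ (Q ^ totient n) = z"
proof -
  have "Q ^ totient n mod n = 1 mod n"
    using euler_theorem[of Q n] assms(2) by (simp add: cong_def coprime_commute)
  thus ?thesis
    using power_mod_eq_if_power_eq_1[OF assms(1)] by (metis power_one_right)
qed

lemma power_pow_mult_eq_if_power_pow_eq_inverse:
  fixes z :: "'b::field"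
  assumes "z ^ (q ^ e) = inverse z"
  shows "z ^ (q ^ (e * m)) = (if even m then z else inverse z)"
proof (induction m)
  case (Suc m)
  have "z ^ (q ^ (e * Suc m)) = (z ^ (q ^ (e * m))) ^ (q ^ e)"
    by (simp add: power_add mult.commute flip: power_mult)
  thus ?case
    using Suc.IH assms by (simp add: power_inverse)
qed simp

lemma common_odd_exponent_power_pow_eq_inverse:
  fixes Z :: "'b::field set"
  assumes "finite Z" "\<And>z. z \<in> Z \<Longrightarrow> \<exists>e. odd e \<and> z ^ (q ^ e) = inverse z"
  shows "\<exists>E. odd E \<and> (\<forall>z\<in>Z. z ^ (q ^ E) = inverse z)"
proof -
  from assms(2) have "\<forall>z\<in>Z. \<exists>e. odd e \<and> z ^ (q ^ e) = inverse z"
    by blast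
  from bchoice[OF this] obtain e where e: "\<forall>z\<in>Z. odd (e z) \<and> z ^ (q ^ e z) = inverse z"
    by blast
  define E where "E = (\<Prod>z\<in>Z. e z)"
  have "odd E"
    unfolding E_def using assms(1) e by (simp add: even_prod_iff)
  moreover have "z ^ (q ^ E) = inverse z" if "z \<in> Z" for z
  proof -
    have "E = e z * (\<Prod>w\<in>Z - {z}. e w)"
      unfolding E_def using assms(1) that by (simp add: prod.remove)
    moreover have "odd (\<Prod>w\<in>Z - {z}. e w)"
      using assms(1) e by (simp add: even_prod_iff)
    ultimately show ?thesis
      using power_pow_mult_eq_if_power_pow_eq_inverse[of z q "e z"] e that by simp
  qed
  ultimately show ?thesis
    by blast
qed

lemma degree_x_pow_minus_one:
  assumes "n > 0"
  shows "degree (monom 1 n - 1 :: 'a::comm_ring_1 poly) = n"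
  using degree_add_eq_left[of "- 1" "monom (1 :: 'a) n"] assms by (simp add: degree_monom_eq)

lemma card_roots_eq_degree_if_rsquarefree:
  fixes p :: "'a::alg_closed_field poly"
  assumes "rsquarefree p"
  shows "card {x. poly p x = 0} = degree p"
proof -
  have "p \<noteq> 0"
    using assms by (simp add: rsquarefree_def)
  then obtain A where A: "size A = degree p" "p = smult (lead_coeff p) (\<Prod>x\<in>#A. [:- x, 1:])"
    using alg_closed_imp_factorization by blast
  have "(\<Prod>x\<in>#B. [:- x, 1:]) \<noteq> (0 :: 'a poly)" for B
    by (induction B) (simp_all del: mult_pCons_left)
  hence "proots (\<Prod>x\<in>#A. [:- x, 1:]) = A"
    by (induction A) (simp_all add: proots_mult del: mult_pCons_left)
  hence "proots p = A"
    using \<open>p \<noteq> 0\<close> by (subst A(2)) simp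
  moreover have "count (proots p) x = count (mset_set {x. poly p x = 0}) x" for x
  proof -
    have "order x p \<le> 1"
      using assms unfolding rsquarefree_def by (metis le_refl zero_le)
    thus ?thesis
      using \<open>p \<noteq> 0\<close> poly_roots_finite[of p] order_gt_0_iff[OF \<open>p \<noteq> 0\<close>, of x]
      by (cases "poly p x = 0") (auto simp: order_0I)
  qed
  ultimately have "A = mset_set {x. poly p x = 0}"
    by (auto intro: multiset_eqI)
  thus ?thesis
    using A(1) by simp
qed

lemma rsquarefree_if_pderiv_nonzero_at_roots:
  fixes p :: "'a::idom poly"
  assumes "p \<noteq> 0" "\<And>a. poly p a = 0 \<Longrightarrow> poly (pderiv p) a \<noteq> 0"
  shows "rsquarefree p"
  unfolding rsquarefree_def
proof (intro conjI allI assms(1))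
  fix a
  show "order a p = 0 \<or> order a p = 1"
  proof (rule ccontr)
    assume "\<not> (order a p = 0 \<or> order a p = 1)"
    define u where "u = [:- a, 1:]"
    have "u ^ 2 dvd p"
      using \<open>\<not> (order a p = 0 \<or> order a p = 1)\<close> by (simp add: u_def order_divides)
    then obtain r where "p = u ^ 2 * r"
      by (rule dvdE)
    hence "p = u * (u * r)"
      by (simp only: power2_eq_square mult.assoc)
    moreover have "poly u a = 0"
      by (simp add: u_def)
    ultimately have "poly p a = 0" "poly (pderiv p) a = 0"
      by (simp_all add: pderiv_mult)
    thus False
      using assms(2) by blast
  qed
qed

lemma rsquarefree_x_pow_minus_one:
  assumes "of_nat n \<noteq> (0 :: 'a::field)"
  shows "rsquarefree (monom 1 n - 1 :: 'a poly)"
proof (rule rsquarefree_if_pderiv_nonzero_at_roots)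
  have "n > 0"
    using assms by (intro Nat.gr0I) simp
  thus "monom 1 n - 1 \<noteq> (0 :: 'a poly)"
    using degree_x_pow_minus_one[OF \<open>n > 0\<close>, where 'a='a] by auto
  fix a :: 'a
  assume "poly (monom 1 n - 1) a = 0"
  hence "a \<noteq> 0"
    using \<open>n > 0\<close> by (auto simp: poly_monom power_0_left)
  thus "poly (pderiv (monom 1 n - 1)) a \<noteq> 0"
    using assms by (simp add: poly_monom pderiv_diff pderiv_monom)
qed

lemma card_roots_of_unity:
  assumes "of_nat n \<noteq> (0 :: 'a::alg_closed_field)"
  shows "card {z :: 'a. z ^ n = 1} = n"
proof -
  have "n > 0"
    using assms by (intro Nat.gr0I) simp
  have "{z :: 'a. z ^ n = 1} = {z. poly (monom 1 n - 1) z = 0}"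
    by (simp add: poly_monom)
  also have "card \<dots> = n"
    using card_roots_eq_degree_if_rsquarefree[OF rsquarefree_x_pow_minus_one[OF assms]]
      degree_x_pow_minus_one[OF \<open>n > 0\<close>] by simp
  finally show ?thesis .
qed

lemma dvd_if_roots_of_unity_power_eq_1:
  assumes "of_nat n \<noteq> (0 :: 'a::alg_closed_field)" "\<And>z :: 'a. z ^ n = 1 \<Longrightarrow> z ^ k = 1"
  shows "n dvd k"
proof (rule ccontr)
  define r where "r = k mod n"
  assume "\<not> n dvd k"
  moreover have "n > 0"
    using assms(1) by (intro Nat.gr0I) simp
  ultimately have "r > 0" "r < n"
    by (auto simp: r_def dvd_eq_mod_eq_0)
  define p :: "'a poly" where "p = monom 1 r - 1"
  have "degree p = r"
    unfolding p_def by (rule degree_x_pow_minus_one[OF \<open>r > 0\<close>])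
  hence "p \<noteq> 0"
    using \<open>r > 0\<close> by auto
  have "{z :: 'a. z ^ n = 1} \<subseteq> {z. poly p z = 0}"
    by (auto simp: p_def r_def poly_monom power_mod_eq_if_power_eq_1 assms(2))
  hence "card {z :: 'a. z ^ n = 1} \<le> card {z. poly p z = 0}"
    using poly_roots_finite[OF \<open>p \<noteq> 0\<close>] by (rule card_mono[rotated])
  also have "\<dots> \<le> r"
    using card_poly_roots_bound[OF \<open>p \<noteq> 0\<close>] \<open>degree p = r\<close> by simp
  finally show False
    using card_roots_of_unity[OF assms(1)] \<open>r < n\<close> by simp
qed

section \<open>The dagger of a polynomial\<close>

lemma to_ac_poly_reflect: "to_ac_poly (reflect_poly f) = reflect_poly (to_ac_poly f)"
  by (rule poly_eqI) (simp add: coeff_reflect_poly coeff_map_poly degree_map_poly)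

lemma poly_dagger_poly_inverse_power:
  fixes f :: "'a::{field,finite} poly"
  assumes "q = CHAR('a) ^ j" "poly (to_ac_poly f) y = 0" "y \<noteq> 0"
  shows "poly (to_ac_poly (dagger_poly q f)) (inverse y ^ q) = 0"
proof -
  have char: "prime CHAR('a alg_closure)" "q = CHAR('a alg_closure) ^ j"
    using assms(1) prime_CHAR_alg_closure by simp_all
  hence "q > 0"
    by (simp add: prime_gt_0_nat)
  hence "to_ac_poly (dagger_poly q f) = map_poly (\<lambda>c. c ^ q) (to_ac_poly (recip_poly f))"
    by (intro poly_eqI) (simp add: dagger_poly_def conj_poly_def coeff_map_poly power_0_left)
  moreover have "poly (to_ac_poly (recip_poly f)) (inverse y) = 0"
    using assms(2,3)
    by (simp add: recip_poly_def map_poly_smult to_ac_poly_reflect poly_reflect_poly_nz)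
  ultimately show ?thesis
    using poly_map_poly_power_char_power[OF char] \<open>q > 0\<close> by (simp add: power_0_left)
qed

lemma lead_coeff_dagger_poly:
  assumes "coeff f 0 \<noteq> 0" "q > 0"
  shows "lead_coeff (dagger_poly q f) = 1"
  using assms by (simp add: dagger_poly_def conj_poly_def recip_poly_def degree_map_poly
      coeff_map_poly coeff_reflect_poly)

lemma degree_dagger_poly:
  assumes "coeff f 0 \<noteq> 0"
  shows "degree (dagger_poly q f) = degree f"
  using assms by (simp add: dagger_poly_def conj_poly_def recip_poly_def degree_map_poly)

lemma coeff_0_neq_0_if_dvd_x_pow_minus_one:
  fixes f :: "'a::idom poly"
  assumes "f dvd monom 1 n - 1" "n > 0"
  shows "coeff f 0 \<noteq> 0"
proof
  assume "coeff f 0 = 0"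
  hence "poly (monom 1 n - 1) 0 = (0 :: 'a)"
    using assms(1) by (metis dvdE mult_eq_0_iff poly_0_coeff_0 poly_mult)
  thus False
    using assms(2) by (simp add: poly_monom power_0_left)
qed

lemma monic_dvd_imp_eq:
  fixes f g :: "'a::idom poly"
  assumes "lead_coeff f = 1" "lead_coeff g = 1" "degree f = degree g" "f dvd g"
  shows "f = g"
proof -
  obtain h where h: "g = f * h"
    using assms(4) ..
  have "f \<noteq> 0" "h \<noteq> 0"
    using assms(1,2) h by auto
  hence "degree h = 0"
    using h assms(3) by (simp add: degree_mult_eq)
  moreover have "lead_coeff h = 1"
    using h assms(1,2) by (simp add: lead_coeff_mult)
  ultimately have "h = 1"
    by (auto elim!: degree_eq_zeroE simp: one_pCons)
  thus ?thesis
    using h by simp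
qed

lemma dvd_dagger_poly_if_root_power_eq_inverse:
  fixes f :: "'a::{field,finite} poly"
  assumes card: "card (UNIV :: 'a set) = q ^ 2" and q: "q = CHAR('a) ^ k"
    and f: "irreducible f" "poly (to_ac_poly f) \<alpha> = 0"
    and E: "odd E" "\<alpha> ^ (q ^ E) = inverse \<alpha>" and "\<alpha> \<noteq> 0"
  shows "f dvd dagger_poly q f"
proof -
  obtain t where t: "E = Suc (2 * t)"
    using E(1) by (metis oddE Suc_eq_plus1)
  define \<gamma> where "\<gamma> = \<alpha> ^ ((q ^ 2) ^ t)"
  have "q ^ 2 = CHAR('a) ^ (2 * k)"
    using q by (simp add: power_mult mult.commute)
  hence root: "poly (to_ac_poly f) \<gamma> = 0"
    unfolding \<gamma>_def by (rule poly_to_ac_poly_power_card_power[OF card _ f(2)])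
  have "(q ^ 2) ^ t * q = q ^ E"
    by (simp add: t power_Suc2 flip: power_mult)
  hence "\<gamma> ^ q = inverse \<alpha>"
    using E(2) unfolding \<gamma>_def by (metis power_mult)
  moreover have "q > 0"
    using q prime_CHAR_finite_field[where 'a='a] by (simp add: prime_gt_0_nat)
  ultimately have "\<gamma> \<noteq> 0" "inverse \<gamma> ^ q = \<alpha>"
    using \<open>\<alpha> \<noteq> 0\<close> by (auto simp: power_inverse power_0_left)
  hence "poly (to_ac_poly (dagger_poly q f)) \<alpha> = 0"
    using poly_dagger_poly_inverse_power[OF q root] by simp
  thus ?thesis
    by (rule irreducible_dvd_if_common_root[OF f])
qed

lemma SCRIM_if_dvd_pow_odd_plus_one:
  fixes f :: "'a::{field,finite} poly"
  assumes card: "card (UNIV :: 'a set) = q ^ 2" and q: "q = CHAR('a) ^ k"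
    and E: "odd E" "n dvd q ^ E + 1"
    and f: "lead_coeff f = 1" "irreducible f" "f dvd monom 1 n - 1"
  shows "SCRIM q f"
proof -
  have "n > 0"
    using E(2) by (intro Nat.gr0I) simp
  have "q > 0"
    using card finite_UNIV_card_ge_0[where 'a='a] by (intro Nat.gr0I) simp
  have "coeff f 0 \<noteq> 0"
    using f(3) \<open>n > 0\<close> by (rule coeff_0_neq_0_if_dvd_x_pow_minus_one)
  have "f \<noteq> 0" "\<not> is_unit f"
    using f(2) by (auto simp: irreducible_not_unit)
  hence "degree (to_ac_poly f) > 0"
    by (simp add: is_unit_iff_degree degree_map_poly)
  then obtain \<alpha> where \<alpha>: "poly (to_ac_poly f) \<alpha> = 0"
    using alg_closed_imp_poly_has_root by blast
  hence "poly (monom 1 n - 1) \<alpha> = 0"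
    using poly_to_ac_poly_eq_0_if_dvd[OF f(3)] by (simp add: to_ac_poly_x_pow_minus_one)
  hence "\<alpha> ^ n = 1"
    by (simp add: poly_monom)
  hence "\<alpha> ^ (q ^ E + 1) = 1"
    using E(2) power_mod_eq_if_power_eq_1[of \<alpha> n "q ^ E + 1"] by simp
  hence "\<alpha> * \<alpha> ^ (q ^ E) = 1"
    by simp
  hence "\<alpha> \<noteq> 0" "\<alpha> ^ (q ^ E) = inverse \<alpha>"
    by (auto dest: inverse_unique)
  hence "f dvd dagger_poly q f"
    using dvd_dagger_poly_if_root_power_eq_inverse[OF card q f(2) \<alpha> E(1)] by blast
  hence "f = dagger_poly q f"
    by (rule monic_dvd_imp_eq[OF f(1) lead_coeff_dagger_poly[OF \<open>coeff f 0 \<noteq> 0\<close> \<open>q > 0\<close>]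
          degree_dagger_poly[OF \<open>coeff f 0 \<noteq> 0\<close>, symmetric]])
  thus ?thesis
    using f(1,2) \<open>coeff f 0 \<noteq> 0\<close> by (simp add: SCRIM_def)
qed

section \<open>Factors of x^n - 1 that equal their dagger\<close>

lemma root_power_odd_eq_inverse_if_eq_dagger_poly:
  fixes m :: "'a::{field,finite} poly"
  assumes card: "card (UNIV :: 'a set) = q ^ 2" and q: "q = CHAR('a) ^ k"
    and m: "irreducible m" "dagger_poly q m = m" "poly (to_ac_poly m) z = 0"
    and n: "z ^ n = 1" "n > 0" "coprime n q"
  shows "\<exists>e. odd e \<and> z ^ (q ^ e) = inverse z"
proof -
  have "z \<noteq> 0"
    using n(1,2) by (auto simp: power_0_left)
  hence "poly (to_ac_poly m) (inverse z ^ q) = 0"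
    using poly_dagger_poly_inverse_power[OF q m(3)] m(2) by simp
  moreover have "q ^ 2 = CHAR('a) ^ (2 * k)"
    using q by (simp add: power_mult mult.commute)
  ultimately obtain i where i: "inverse z ^ q = z ^ ((q ^ 2) ^ i)"
    using roots_of_irreducible_frobenius_orbit[OF card _ m(1,3)] by blast
  define s where "s = totient n"
  have "s > 0"
    using n(2) by (simp add: s_def)
  have period: "z ^ ((q ^ 2) ^ s) = z"
    unfolding s_def using n(1,3) by (intro power_pow_totient_eq) (simp_all add: coprime_power_right_iff)
  have "z ^ (q ^ (2 * i + (2 * s - 1))) = (z ^ ((q ^ 2) ^ i)) ^ (q ^ (2 * s - 1))"
    by (simp only: power_add power_mult)
  also have "\<dots> = inverse z ^ (q * q ^ (2 * s - 1))"
    by (simp only: i power_mult)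
  also have "q * q ^ (2 * s - 1) = (q ^ 2) ^ s"
    using \<open>s > 0\<close> by (simp flip: power_Suc power_mult)
  also have "inverse z ^ ((q ^ 2) ^ s) = inverse z"
    using period by (simp add: power_inverse)
  finally show ?thesis
    using \<open>s > 0\<close> by (intro exI[of _ "2 * i + (2 * s - 1)"]) auto
qed

lemma of_nat_alg_closure_neq_0_if_coprime:
  assumes "q = CHAR('a::{field,finite}) ^ k" "k > 0" "coprime n q"
  shows "of_nat n \<noteq> (0 :: 'a alg_closure)"
proof
  assume "of_nat n = (0 :: 'a alg_closure)"
  hence "CHAR('a) dvd n"
    by (simp add: of_nat_eq_0_iff_char_dvd)
  moreover have "CHAR('a) dvd q"
    using assms(1,2) by simp
  ultimately have "is_unit CHAR('a)"
    by (rule coprime_common_divisor[OF assms(3)])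
  thus False
    using not_prime_unit prime_CHAR_finite_field[where 'a='a] by auto
qed

lemma dvd_pow_odd_plus_one_if_factors_SCRIM:
  fixes q n :: nat
  assumes card: "card (UNIV :: 'a::{field,finite} set) = q ^ 2"
    and q: "q = CHAR('a) ^ k" "k > 0" and n: "n > 0" "coprime n q"
    and factors: "\<forall>f :: 'a poly. lead_coeff f = 1 \<and> irreducible f \<and> f dvd (monom 1 n - 1)
      \<longrightarrow> SCRIM q f"
  shows "\<exists>E. odd E \<and> n dvd q ^ E + 1"
proof -
  define Z where "Z = {z :: 'a alg_closure. z ^ n = 1}"
  have char_n: "of_nat n \<noteq> (0 :: 'a alg_closure)"
    using q n(2) by (rule of_nat_alg_closure_neq_0_if_coprime)
  hence "finite Z"
    using card_roots_of_unity[OF char_n] n(1) by (intro card_ge_0_finite) (simp add: Z_def)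
  have "\<exists>e. odd e \<and> z ^ (q ^ e) = inverse z" if "z \<in> Z" for z
  proof -
    have root: "poly (to_ac_poly (monom 1 n - 1)) z = 0"
      using that by (simp add: Z_def to_ac_poly_x_pow_minus_one poly_monom)
    have "monom 1 n - 1 \<noteq> (0 :: 'a poly)"
      using degree_x_pow_minus_one[OF n(1), where 'a='a] n(1) by auto
    then obtain m where m: "lead_coeff m = 1" "irreducible m" "poly (to_ac_poly m) z = 0"
      "\<And>g. poly (to_ac_poly g) z = 0 \<Longrightarrow> m dvd g"
      using minimal_polynomial_exists root by blast
    have "SCRIM q m"
      using factors m(1,2) m(4)[OF root] by blast
    hence "dagger_poly q m = m"
      by (simp add: SCRIM_def)
    thus ?thesis
      using root_power_odd_eq_inverse_if_eq_dagger_poly[OF card q(1) m(2) _ m(3) _ n] that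
      by (simp add: Z_def)
  qed
  then obtain E where E: "odd E" "\<forall>z\<in>Z. z ^ (q ^ E) = inverse z"
    using common_odd_exponent_power_pow_eq_inverse[OF \<open>finite Z\<close>] by blast
  have "z ^ (q ^ E + 1) = 1" if "z ^ n = 1" for z :: "'a alg_closure"
  proof -
    have "z \<in> Z" "z \<noteq> 0"
      using that n(1) by (auto simp: Z_def power_0_left)
    thus ?thesis
      using E(2) by simp
  qed
  hence "n dvd q ^ E + 1"
    by (rule dvd_if_roots_of_unity_power_eq_1[OF char_n])
  thus ?thesis
    using E(1) by blast
qed

theorem theorem2p12:
  fixes q n1 n2 :: nat
  assumes card: "card (UNIV :: 'a::{field,finite} set) = q ^ 2"
    and qpp: "\<exists>p k. prime p \<and> k > 0 \<and> q = p ^ k"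
    and n1: "odd n1" "n1 > 0" "coprime n1 q"
    and n2: "odd n2" "n2 > 0" "coprime n2 q"
    and h1: "\<forall>f :: 'a poly. lead_coeff f = 1 \<and> irreducible f \<and> f dvd (monom 1 n1 - 1) \<longrightarrow> SCRIM q f"
    and h2: "\<forall>f :: 'a poly. lead_coeff f = 1 \<and> irreducible f \<and> f dvd (monom 1 n2 - 1) \<longrightarrow> SCRIM q f"
  shows "\<forall>f :: 'a poly. lead_coeff f = 1 \<and> irreducible f \<and> f dvd (monom 1 (n1 * n2) - 1) \<longrightarrow> SCRIM q f"
proof -
  obtain p k where pk: "prime p" "k > 0" "q = p ^ k"
    using qpp by blast
  have "CHAR('a) = p"
    using card pk by (intro CHAR_eq_if_card_eq_prime_power[of p "k * 2"]) (simp_all add: power_mult)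
  hence q: "q = CHAR('a) ^ k"
    using pk(3) by simp
  obtain a where a: "odd a" "n1 dvd q ^ a + 1"
    using dvd_pow_odd_plus_one_if_factors_SCRIM[OF card q pk(2) n1(2,3) h1] by blast
  obtain b where b: "odd b" "n2 dvd q ^ b + 1"
    using dvd_pow_odd_plus_one_if_factors_SCRIM[OF card q pk(2) n2(2,3) h2] by blast
  have "n1 * n2 dvd q ^ (a * b * n1) + 1"
    using a b n1(1) by (intro mult_dvd_pow_plus_one_if_dvd_pow_odd_plus_one)
  moreover have "odd (a * b * n1)"
    using a b n1(1) by simp
  ultimately show ?thesis
    using SCRIM_if_dvd_pow_odd_plus_one[OF card q] by blast
qed

end
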